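(* Let $p$ be an SCF rationalizable within the class of Fechnerian RUMs, and let $x,y\in X$. If $(x,y)\in T(R^s\cup R^f)$, then every Fechnerian RUM $(u,g)$ rationalizing $p$ satisfies $u(x)\geq u(y)$. If $(x,y)\in T_P(R^s\cup R^f)$, then every such model satisfies $u(x)>u(y)$.
   Context: $X$ is a finite set of options; $C=\{(x,y): x,y\in X,\ x\neq y\}$; $D\subseteq C$ is a fixed non-empty set with $(x,y)\in D\Rightarrow (y,x)\in D$. An SCF $p$ assigns to each $(x,y)\in D$ a number $p(x,y)>0$ with $p(x,y)+p(y,x)=1$. A RUM is a pair $(u,g)$ with $u:X\to\mathbb{R}$ and $g$ assigning to each $(x,y)\in C$ a density $g(x,y)$ on $\mathbb{R}$ (cdf $G(x,y)$) with $\int v\,g(x,y)(v)\,dv=u(x)-u(y)=:v(x,y)$, $g(x,y)(v)=g(y,x)(-v)$ for all $v$, and connected support. It rationalizes $p$ if $G(x,y)(0)=p(y,x)$ for all $(x,y)\in D$. A RUM is Fechnerian if there is a density $g$ on $\mathbb{R}$ with $g(\delta)=g(-\delta)>0$ for all $\delta\geq0$ such that $g(x,y)(v)=g(v-v(x,y))$ for all $(x,y)\in C$, $v\in\mathbb{R}$. Relations on $X$: $(x,y)\in R^s$ iff $x=y$, or $(x,y)\in D$ and $p(x,y)\geq p(y,x)$; $(x,y)\in R^f$ iff $(x,y)\in C\setminus D$ and there exists $z\in X$ with $(x,z),(y,z)\in D$ and $p(x,z)\geq p(y,z)$. For a binary relation $R$, $T(R)$ is its transitive closure ($(x,y)\in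 T(R)$ iff there is a sequence $x_1=x,\dots,x_n=y$, $n\geq2$, with consecutive pairs in $R$) and $T_P(R)$ the asymmetric part of $T(R)$. *)

theory Defs
  imports "HOL-Analysis.Analysis"
begin

definition pairs_C :: "'a set \<Rightarrow> ('a \<times> 'a) set" where
  "pairs_C X = {(x, y). x \<in> X \<and> y \<in> X \<and> x \<noteq> y}"

definition valid_domain :: "'a set \<Rightarrow> ('a \<times> 'a) set \<Rightarrow> bool" where
  "valid_domain X D \<longleftrightarrow> finite X \<and> D \<subseteq> pairs_C X \<and> D \<noteq> {} \<and>
     (\<forall>x y. (x, y) \<in> D \<longrightarrow> (y, x) \<in> D)"

definition is_SCF :: "('a \<times> 'a) set \<Rightarrow> ('a \<Rightarrow> 'a \<Rightarrow> real) \<Rightarrow> bool" where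
  "is_SCF D p \<longleftrightarrow> (\<forall>x y. (x, y) \<in> D \<longrightarrow> p x y > 0 \<and> p x y + p y x = 1)"

definition is_density :: "(real \<Rightarrow> real) \<Rightarrow> bool" where
  "is_density f \<longleftrightarrow> f \<in> borel_measurable lborel \<and> (\<forall>v. 0 \<le> f v) \<and>
     integrable lborel f \<and> integral\<^sup>L lborel f = 1"

definition dens_support :: "(real \<Rightarrow> real) \<Rightarrow> real set" where
  "dens_support f = closure {v. f v > 0}"

definition cdf_of :: "(real \<Rightarrow> real) \<Rightarrow> real \<Rightarrow> real" where
  "cdf_of f t = (LINT v:{..t}|lborel. f v)"

definition is_RUM :: "'a set \<Rightarrow> ('a \<Rightarrow> real) \<Rightarrow> ('a \<Rightarrow> 'a \<Rightarrow> real \<Rightarrow> real) \<Rightarrow> bool" where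
  "is_RUM X u g \<longleftrightarrow> (\<forall>(x, y) \<in> pairs_C X.
      is_density (g x y) \<and>
      integrable lborel (\<lambda>v. v * g x y v) \<and>
      (\<integral>v. v * g x y v \<partial>lborel) = u x - u y \<and>
      (\<forall>v. g x y v = g y x (- v)) \<and>
      connected (dens_support (g x y)))"

definition is_Fechnerian_RUM :: "'a set \<Rightarrow> ('a \<Rightarrow> real) \<Rightarrow> ('a \<Rightarrow> 'a \<Rightarrow> real \<Rightarrow> real) \<Rightarrow> bool" where
  "is_Fechnerian_RUM X u g \<longleftrightarrow> is_RUM X u g \<and>
     (\<exists>g0. is_density g0 \<and> (\<forall>\<delta>\<ge>0. g0 \<delta> = g0 (- \<delta>) \<and> g0 \<delta> > 0) \<and>
        (\<forall>(x, y) \<in> pairs_C X. \<forall>v. g x y v = g0 (v - (u x - u y))))"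

definition rationalizes :: "('a \<times> 'a) set \<Rightarrow> ('a \<Rightarrow> 'a \<Rightarrow> real \<Rightarrow> real) \<Rightarrow> ('a \<Rightarrow> 'a \<Rightarrow> real) \<Rightarrow> bool" where
  "rationalizes D g p \<longleftrightarrow> (\<forall>x y. (x, y) \<in> D \<longrightarrow> cdf_of (g x y) 0 = p y x)"

definition R_s :: "'a set \<Rightarrow> ('a \<times> 'a) set \<Rightarrow> ('a \<Rightarrow> 'a \<Rightarrow> real) \<Rightarrow> ('a \<times> 'a) set" where
  "R_s X D p = {(x, y). x \<in> X \<and> y \<in> X \<and> (x = y \<or> ((x, y) \<in> D \<and> p x y \<ge> p y x))}"

definition R_f :: "'a set \<Rightarrow> ('a \<times> 'a) set \<Rightarrow> ('a \<Rightarrow> 'a \<Rightarrow> real) \<Rightarrow> ('a \<times> 'a) set" where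
  "R_f X D p = {(x, y). (x, y) \<in> pairs_C X - D \<and>
      (\<exists>z \<in> X. (x, z) \<in> D \<and> (y, z) \<in> D \<and> p x z \<ge> p y z)}"

definition T_cl :: "('a \<times> 'a) set \<Rightarrow> ('a \<times> 'a) set" where
  "T_cl R = trancl R"

definition T_P :: "('a \<times> 'a) set \<Rightarrow> ('a \<times> 'a) set" where
  "T_P R = {(x, y). (x, y) \<in> T_cl R \<and> (y, x) \<notin> T_cl R}"

end

theory Submission
  imports Defs
begin

text \<open>In a Fechnerian RUM every choice probability is a fixed strictly increasing function of a
utility difference: \<open>p b a = G (u b - u a)\<close>, with \<open>G\<close> the cdf of the everywhere positive noise
density. Hence a step of \<open>R\<^sup>s\<close> or \<open>R\<^sup>f\<close> from \<open>a\<close> to \<open>b\<close> forces \<open>u a \<ge> u b\<close>, and when equality holds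
the step can be reversed. Along a chain of the transitive closure utilities are therefore
non-increasing, and if the end points have equal utility, all of them do and the chain can be
walked backwards; so a pair in the asymmetric part must have strictly decreasing utility.\<close>

lemma set_integral_pos:
  fixes f :: "'a \<Rightarrow> real"
  assumes f: "set_integrable M A f" and A: "A \<in> sets M" "A \<notin> null_sets M"
    and pos: "\<And>x. x \<in> A \<Longrightarrow> 0 < f x"
  shows "0 < (LINT x:A|M. f x)"
proof -
  have nonneg: "AE x in M. 0 \<le> indicator A x *\<^sub>R f x"
    using pos by (auto simp: indicator_def less_imp_le)
  have "(LINT x:A|M. f x) \<noteq> 0"
  proof
    assume "(LINT x:A|M. f x) = 0"
    then have "AE x in M. indicator A x *\<^sub>R f x = 0"
      using integral_nonneg_eq_0_iff_AE[OF f[unfolded set_integrable_def] nonneg]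
      by (simp add: set_lebesgue_integral_def)
    then have "AE x in M. x \<notin> A"
      by eventually_elim (auto simp: indicator_def dest: pos)
    with A show False
      using AE_iff_null_sets by blast
  qed
  moreover have "0 \<le> (LINT x:A|M. f x)"
    using nonneg unfolding set_lebesgue_integral_def by (simp add: integral_nonneg_AE)
  ultimately show ?thesis
    by simp
qed

lemma cdf_of_strict_mono:
  assumes "is_density f" and pos: "\<And>v. 0 < f v"
  shows "strict_mono (cdf_of f)"
proof (rule strict_monoI)
  fix a b :: real
  assume "a < b"
  have f: "set_integrable lborel A f" if "A \<in> sets lborel" for A
    using assms(1) that unfolding is_density_def set_integrable_def
    by (blast intro: integrable_mult_indicator)
  have "{..b} = {..a} \<union> {a<..b}"
    using \<open>a < b\<close> by auto
  then have "cdf_of f b = cdf_of f a + (LINT v:{a<..b}|lborel. f v)"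
    unfolding cdf_of_def by (simp only:) (rule set_integral_Un; auto intro: f)
  moreover have "0 < (LINT v:{a<..b}|lborel. f v)"
    using \<open>a < b\<close> by (intro set_integral_pos f pos) (auto simp: null_sets_def)
  ultimately show "cdf_of f a < cdf_of f b"
    by simp
qed

lemma cdf_of_shift: "cdf_of (\<lambda>v. f (v - d)) t = cdf_of f (t - d)"
proof -
  have "cdf_of (\<lambda>v. f (v - d)) t = (\<integral>v. indicator {..t} v *\<^sub>R f (v - d) \<partial>lborel)"
    by (simp add: cdf_of_def set_lebesgue_integral_def)
  also have "\<dots> = \<bar>1\<bar> *\<^sub>R (\<integral>w. indicator {..t} (d + 1 * w) *\<^sub>R f ((d + 1 * w) - d) \<partial>lborel)"
    by (rule lborel_integral_real_affine) simp
  also have "\<dots> = (\<integral>w. indicator {..t - d} w *\<^sub>R f w \<partial>lborel)"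
    by (simp add: indicator_def algebra_simps)
  finally show ?thesis
    by (simp add: cdf_of_def set_lebesgue_integral_def)
qed

lemma Fechnerian_RUM_choice_prob:
  assumes model: "is_Fechnerian_RUM X u g" and rat: "rationalizes D g p" and D: "D \<subseteq> pairs_C X"
  obtains G :: "real \<Rightarrow> real"
    where "strict_mono G" and "\<And>a b. (a, b) \<in> D \<Longrightarrow> p b a = G (u b - u a)"
proof -
  obtain g0 where g0: "is_density g0" and sym_pos: "\<forall>\<delta>\<ge>0. g0 \<delta> = g0 (- \<delta>) \<and> g0 \<delta> > 0"
    and g: "\<forall>(x, y) \<in> pairs_C X. \<forall>v. g x y v = g0 (v - (u x - u y))"
    using model unfolding is_Fechnerian_RUM_def by blast
  have "0 < g0 v" for v
    using sym_pos[rule_format, of "\<bar>v\<bar>"] by (cases "0 \<le> v") auto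
  with g0 have "strict_mono (cdf_of g0)"
    by (rule cdf_of_strict_mono)
  moreover have "p b a = cdf_of g0 (u b - u a)" if "(a, b) \<in> D" for a b
  proof -
    have "p b a = cdf_of (g a b) 0"
      using rat that by (simp add: rationalizes_def)
    also have "g a b = (\<lambda>v. g0 (v - (u a - u b)))"
      using g D that by fastforce
    finally show ?thesis
      by (simp add: cdf_of_shift)
  qed
  ultimately show thesis
    by (rule that)
qed

lemma R_s_R_f_utility_le:
  fixes u :: "'a \<Rightarrow> real"
  assumes "sym D" and "strict_mono G" and choice: "\<And>a b. (a, b) \<in> D \<Longrightarrow> p b a = G (u b - u a)"
    and "(a, b) \<in> R_s X D p \<union> R_f X D p"
  shows "u b \<le> u a"
proof -
  have G_le: "s \<le> t" if "G s \<le> G t" for s t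
    using strict_mono_less_eq[OF \<open>strict_mono G\<close>] that by blast
  have choice': "p a b = G (u a - u b)" if "(a, b) \<in> D" for a b
    using choice \<open>sym D\<close> that by (blast dest: symD)
  consider "a = b" | "(a, b) \<in> D" "p b a \<le> p a b"
    | z where "(a, z) \<in> D" "(b, z) \<in> D" "p b z \<le> p a z"
    using assms(4) unfolding R_s_def R_f_def by blast
  then show ?thesis
  proof cases
    case 2
    then have "u b - u a \<le> u a - u b"
      using choice choice' G_le by metis
    then show ?thesis by simp
  next
    case 3
    then have "u b - u z \<le> u a - u z"
      using choice' G_le by metis
    then show ?thesis by simp
  qed simp
qed

lemma R_s_R_f_converse:
  fixes u :: "'a \<Rightarrow> real"
  assumes "sym D" and choice: "\<And>a b. (a, b) \<in> D \<Longrightarrow> p b a = G (u b - u a)"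
    and ab: "(a, b) \<in> R_s X D p \<union> R_f X D p" and "u a = u b"
  shows "(b, a) \<in> R_s X D p \<union> R_f X D p"
proof -
  have choice': "p a b = G (u a - u b)" if "(a, b) \<in> D" for a b
    using choice \<open>sym D\<close> that by (blast dest: symD)
  from ab \<open>sym D\<close> consider "(a, b) \<in> R_s X D p" "(b, a) \<in> D" | "(a, b) \<in> R_s X D p" "a = b"
    | z where "(a, b) \<in> pairs_C X - D" "(b, a) \<notin> D" "z \<in> X" "(a, z) \<in> D" "(b, z) \<in> D"
    unfolding R_s_def R_f_def by (blast dest: symD)
  then show ?thesis
  proof cases
    case 1
    then show ?thesis
      using choice \<open>u a = u b\<close> unfolding R_s_def by auto
  next
    case 2
    then show ?thesis
      unfolding R_s_def by auto
  next
    case 3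
    then show ?thesis
      using choice' \<open>u a = u b\<close> unfolding R_f_def pairs_C_def by auto
  qed
qed

lemma trancl_utility_le_and_converse:
  fixes u :: "'a \<Rightarrow> 'b::linorder"
  assumes le: "\<And>a b. (a, b) \<in> R \<Longrightarrow> u b \<le> u a"
    and converse: "\<And>a b. (a, b) \<in> R \<Longrightarrow> u a = u b \<Longrightarrow> (b, a) \<in> R"
    and "(x, y) \<in> R\<^sup>+"
  shows "u y \<le> u x \<and> (u x = u y \<longrightarrow> (y, x) \<in> R\<^sup>+)"
  using \<open>(x, y) \<in> R\<^sup>+\<close>
proof (induction rule: trancl_induct)
  case (base y)
  then show ?case
    using le converse by blast
next
  case (step b c)
  have "u c \<le> u b" "u b \<le> u x"
    using step le by auto
  moreover have "(c, x) \<in> R\<^sup>+" if "u x = u c"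
  proof -
    have "u b = u c" "u x = u b"
      using that \<open>u c \<le> u b\<close> \<open>u b \<le> u x\<close> by (auto intro: order_antisym)
    then show ?thesis
      using step converse by (blast intro: trancl_into_trancl2)
  qed
  ultimately show ?case
    by auto
qed

lemma T_P_utility_less:
  fixes u :: "'a \<Rightarrow> 'b::linorder"
  assumes "\<And>a b. (a, b) \<in> R \<Longrightarrow> u b \<le> u a"
    and "\<And>a b. (a, b) \<in> R \<Longrightarrow> u a = u b \<Longrightarrow> (b, a) \<in> R"
    and "(x, y) \<in> T_P R"
  shows "u y < u x"
proof -
  have "(x, y) \<in> R\<^sup>+" "(y, x) \<notin> R\<^sup>+"
    using assms(3) unfolding T_P_def T_cl_def by auto
  with trancl_utility_le_and_converse[of R u x y] assms(1,2) show ?thesis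
    by (metis order_less_le)
qed

lemma Fechnerian_RUM_R_s_R_f_step:
  assumes "D \<subseteq> pairs_C X" and "sym D"
    and model: "is_Fechnerian_RUM X u g" "rationalizes D g p"
    and ab: "(a, b) \<in> R_s X D p \<union> R_f X D p"
  shows "u b \<le> u a" and "u a = u b \<Longrightarrow> (b, a) \<in> R_s X D p \<union> R_f X D p"
proof -
  obtain G where "strict_mono G" and choice: "\<And>a b. (a, b) \<in> D \<Longrightarrow> p b a = G (u b - u a)"
    using Fechnerian_RUM_choice_prob[OF model \<open>D \<subseteq> pairs_C X\<close>] by blast
  show "u b \<le> u a"
    using \<open>sym D\<close> \<open>strict_mono G\<close> choice ab by (rule R_s_R_f_utility_le)
  show "(b, a) \<in> R_s X D p \<union> R_f X D p" if "u a = u b"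
    using \<open>sym D\<close> choice ab that by (rule R_s_R_f_converse)
qed

theorem corollary5:
  fixes X :: "'a set" and D :: "('a \<times> 'a) set" and p :: "'a \<Rightarrow> 'a \<Rightarrow> real"
    and x y :: 'a
  assumes "valid_domain X D"
    and "is_SCF D p"
    and "\<exists>u g. is_Fechnerian_RUM X u g \<and> rationalizes D g p"
    and "x \<in> X" and "y \<in> X"
  shows "((x, y) \<in> T_cl (R_s X D p \<union> R_f X D p) \<longrightarrow>
           (\<forall>u g. is_Fechnerian_RUM X u g \<and> rationalizes D g p \<longrightarrow> u x \<ge> u y)) \<and>
         ((x, y) \<in> T_P (R_s X D p \<union> R_f X D p) \<longrightarrow>
           (\<forall>u g. is_Fechnerian_RUM X u g \<and> rationalizes D g p \<longrightarrow> u x > u y))"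
proof -
  let ?R = "R_s X D p \<union> R_f X D p"
  have D: "D \<subseteq> pairs_C X" "sym D"
    using \<open>valid_domain X D\<close> unfolding valid_domain_def by (auto intro: symI)
  have "(x, y) \<in> T_cl ?R \<Longrightarrow> u y \<le> u x" and "(x, y) \<in> T_P ?R \<Longrightarrow> u y < u x"
    if "is_Fechnerian_RUM X u g" "rationalizes D g p" for u g
  proof -
    note step = Fechnerian_RUM_R_s_R_f_step[OF D that]
    show "u y \<le> u x" if "(x, y) \<in> T_cl ?R"
      using trancl_utility_le_and_converse[of ?R u] step that unfolding T_cl_def by blast
    show "u y < u x" if "(x, y) \<in> T_P ?R"
      using T_P_utility_less[of ?R u] step that by blast
  qed
  then show ?thesis
    by auto
qed

end
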